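(* Let $p$ be an odd prime and let $L$ be a $\mathbb{Z}_p$-lattice of rank $k\ge4$ with $L\simeq\langle\epsilon_1,p^{e_2}\epsilon_2,p^{e_3}\epsilon_3,\dots,p^{e_k}\epsilon_k\rangle$, where $0\le e_2\le\cdots\le e_k$ and $\epsilon_i\in\mathbb{Z}_p^\times$. If $\nu_p(\langle\epsilon_1,p^{e_2}\epsilon_2,p^{e_3}\epsilon_3\rangle)=\infty$ (i.e., this ternary lattice is anisotropic), then $B(\mathbf x,\mathbf y)\in p^{\nu_p(L)-1}\mathbb{Z}_p$ for all $\mathbf x,\mathbf y\in L$ with $\mathrm{ord}_p(Q(\mathbf x))=\mathrm{ord}_p(Q(\mathbf y))=\nu_p(L)$.
   Context: $\langle a_1,\dots,a_k\rangle$ denotes the $\mathbb{Z}_p$-lattice with diagonal Gram matrix; $B$ is the bilinear form and $Q(\mathbf x)=B(\mathbf x,\mathbf x)$. For odd $p$, $SC_p=\{1,\Delta_p,p,p\Delta_p\}$ with $\Delta_p$ a non-square unit. For $L$ of rank $\ge4$ and $s\in SC_p$, let $u\ge0$ be least with $sp^{2u}=Q(\mathbf x)$ for some $\mathbf x\in L$; $\nu_{p,s}(L)=\mathrm{ord}_p(sp^{2u})$ and $\nu_p(L)=\max_{s\in SC_p}\nu_{p,s}(L)$. For an anisotropic ternary lattice $K$, $\nu_p(K)=\infty$. *)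

theory Defs
  imports "HOL-Number_Theory.Number_Theory" "HOL-Library.Extended_Nat"
begin

text \<open>p-adic integers as compatible sequences of residues: f n is the residue mod p^n.\<close>
definition Zp :: "int \<Rightarrow> (nat \<Rightarrow> int) set" where
  "Zp p = {f. \<forall>n. 0 \<le> f n \<and> f n < p ^ n \<and> f (Suc n) mod p ^ n = f n}"

definition zp_zero :: "nat \<Rightarrow> int" where
  "zp_zero = (\<lambda>_. 0)"

definition zp_of_int :: "int \<Rightarrow> int \<Rightarrow> (nat \<Rightarrow> int)" where
  "zp_of_int p c = (\<lambda>n. c mod p ^ n)"

definition zp_mult :: "int \<Rightarrow> (nat \<Rightarrow> int) \<Rightarrow> (nat \<Rightarrow> int) \<Rightarrow> (nat \<Rightarrow> int)" where
  "zp_mult p f g = (\<lambda>n. (f n * g n) mod p ^ n)"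

definition zp_unit :: "int \<Rightarrow> (nat \<Rightarrow> int) \<Rightarrow> bool" where
  "zp_unit p f \<longleftrightarrow> f \<in> Zp p \<and> f 1 \<noteq> 0"

definition zp_ord :: "int \<Rightarrow> (nat \<Rightarrow> int) \<Rightarrow> enat" where
  "zp_ord p f = (if f = zp_zero then \<infinity> else enat (LEAST n. f (Suc n) \<noteq> 0))"

definition in_pow_ideal :: "int \<Rightarrow> nat \<Rightarrow> (nat \<Rightarrow> int) \<Rightarrow> bool" where
  "in_pow_ideal p m z \<longleftrightarrow> (\<exists>w\<in>Zp p. z = zp_mult p (zp_of_int p (p ^ m)) w)"

definition vec_Zp :: "int \<Rightarrow> nat \<Rightarrow> (nat \<Rightarrow> nat \<Rightarrow> int) \<Rightarrow> bool" where
  "vec_Zp p k x \<longleftrightarrow> (\<forall>i<k. x i \<in> Zp p)"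

definition diag_B :: "int \<Rightarrow> (nat \<Rightarrow> nat \<Rightarrow> int) \<Rightarrow> nat \<Rightarrow>
    (nat \<Rightarrow> nat \<Rightarrow> int) \<Rightarrow> (nat \<Rightarrow> nat \<Rightarrow> int) \<Rightarrow> (nat \<Rightarrow> int)" where
  "diag_B p a k x y = (\<lambda>n. (\<Sum>i<k. a i n * x i n * y i n) mod p ^ n)"

definition diag_Q :: "int \<Rightarrow> (nat \<Rightarrow> nat \<Rightarrow> int) \<Rightarrow> nat \<Rightarrow> (nat \<Rightarrow> nat \<Rightarrow> int) \<Rightarrow> (nat \<Rightarrow> int)" where
  "diag_Q p a k x = diag_B p a k x x"

definition anisotropic :: "int \<Rightarrow> (nat \<Rightarrow> nat \<Rightarrow> int) \<Rightarrow> nat \<Rightarrow> bool" where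
  "anisotropic p a k \<longleftrightarrow> (\<forall>x. vec_Zp p k x \<and> diag_Q p a k x = zp_zero \<longrightarrow> (\<forall>i<k. x i = zp_zero))"

definition nonsq :: "int \<Rightarrow> int" where
  "nonsq p = (SOME d. 0 < d \<and> d < p \<and> \<not> QuadRes p d)"

definition SC :: "int \<Rightarrow> (nat \<Rightarrow> int) set" where
  "SC p = {zp_of_int p 1, zp_of_int p (nonsq p), zp_of_int p p, zp_of_int p (p * nonsq p)}"

definition nu_s :: "int \<Rightarrow> (nat \<Rightarrow> nat \<Rightarrow> int) \<Rightarrow> nat \<Rightarrow> (nat \<Rightarrow> int) \<Rightarrow> enat" where
  "nu_s p a k s =
    (let R = (\<lambda>u. \<exists>x. vec_Zp p k x \<and> diag_Q p a k x = zp_mult p s (zp_of_int p (p ^ (2 * u))))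
     in if (\<exists>u. R u) then zp_ord p (zp_mult p s (zp_of_int p (p ^ (2 * (LEAST u. R u))))) else \<infinity>)"

definition nu :: "int \<Rightarrow> (nat \<Rightarrow> nat \<Rightarrow> int) \<Rightarrow> nat \<Rightarrow> enat" where
  "nu p a k = Sup (nu_s p a k ` SC p)"

definition lat_coeff :: "int \<Rightarrow> (nat \<Rightarrow> nat) \<Rightarrow> (nat \<Rightarrow> nat \<Rightarrow> int) \<Rightarrow> nat \<Rightarrow> nat \<Rightarrow> int" where
  "lat_coeff p e eps i = zp_mult p (zp_of_int p (p ^ e i)) (eps i)"

end

theory Submission
  imports Defs
begin

text \<open>Suppose \<open>ord\<^sub>p Q(x) = \<nu>\<close>. Then every term \<open>a\<^sub>l x\<^sub>l\<^sup>2\<close> of \<open>Q(x)\<close> lies in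
  \<open>p\<^sup>\<nu>\<^sup>-\<^sup>1 \<int>\<^sub>p\<close>: otherwise let \<open>m < \<nu> - 1\<close> be the least valuation of a term. The terms of
  valuation \<open>m\<close> cancel modulo \<open>p\<^sup>m\<^sup>+\<^sup>1\<close>, so there are at least two of them, and rescaling
  the coordinates by units (a binary unit form over \<open>\<bbbF>\<^sub>p\<close> is universal) followed by
  Hensel lifting of one coordinate shows that \<open>L\<close> represents \<open>p\<^sup>m t\<close> for every \<open>t\<close>.
  This forces \<open>\<nu> \<le> m + 1\<close>, a contradiction. Since
  \<open>(a\<^sub>l x\<^sub>l y\<^sub>l)\<^sup>2 = (a\<^sub>l x\<^sub>l\<^sup>2)(a\<^sub>l y\<^sub>l\<^sup>2)\<close>, the same bound holds for the terms of \<open>B(x, y)\<close>.\<close>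

text \<open>Unreduced representatives of \<open>p\<close>-adic integers: sums and products of coordinates are
  formed on these and reduced modulo \<open>p\<^sup>n\<close> only at the end.\<close>
definition coherent :: "int \<Rightarrow> (nat \<Rightarrow> int) \<Rightarrow> bool" where
  "coherent p F \<longleftrightarrow> (\<forall>n. [F (Suc n) = F n] (mod p ^ n))"

lemma coherent_cong:
  assumes "coherent p F" "n \<le> N"
  shows "[F N = F n] (mod p ^ n)"
  using assms(2)
proof (induction N rule: dec_induct)
  case base
  then show ?case by simp
next
  case (step N)
  have "[F (Suc N) = F N] (mod p ^ n)"
    using assms(1) cong_dvd_modulus le_imp_power_dvd[OF step.hyps(1)]
    unfolding coherent_def by blast
  then show ?case using step.IH cong_trans by blast
qed

lemma Zp_imp_coherent: "f \<in> Zp p \<Longrightarrow> coherent p f"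
  unfolding coherent_def Zp_def cong_def by auto

lemma Zp_mod_power:
  assumes "f \<in> Zp p" "n \<le> N"
  shows "f N mod p ^ n = f n"
  using coherent_cong[OF Zp_imp_coherent[OF assms(1)] assms(2)] assms(1)
  unfolding cong_def Zp_def by simp

lemma coherent_mod_in_Zp:
  assumes "coherent p F" "p > 1"
  shows "(\<lambda>n. F n mod p ^ n) \<in> Zp p"
proof -
  have "F (Suc n) mod p ^ Suc n mod p ^ n = F n mod p ^ n" for n
    using assms(1) mod_mod_cancel[OF le_imp_power_dvd[of n "Suc n" p]]
    unfolding coherent_def cong_def by simp
  then show ?thesis unfolding Zp_def using assms(2) by auto
qed

lemma coherent_const: "coherent p (\<lambda>n. c)"
  unfolding coherent_def by simp

lemma coherent_mult: "coherent p F \<Longrightarrow> coherent p G \<Longrightarrow> coherent p (\<lambda>n. F n * G n)"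
  unfolding coherent_def by (simp add: cong_mult)

lemma coherent_diff: "coherent p F \<Longrightarrow> coherent p G \<Longrightarrow> coherent p (\<lambda>n. F n - G n)"
  unfolding coherent_def by (simp add: cong_diff)

lemma coherent_sum:
  "(\<And>i. i \<in> I \<Longrightarrow> coherent p (F i)) \<Longrightarrow> coherent p (\<lambda>n. \<Sum>i\<in>I. F i n)"
  unfolding coherent_def by (simp add: cong_sum)

lemma zp_of_int_in_Zp: "p > 1 \<Longrightarrow> zp_of_int p c \<in> Zp p"
  unfolding zp_of_int_def by (rule coherent_mod_in_Zp[OF coherent_const])

lemma zp_mult_in_Zp: "f \<in> Zp p \<Longrightarrow> g \<in> Zp p \<Longrightarrow> p > 1 \<Longrightarrow> zp_mult p f g \<in> Zp p"
  unfolding zp_mult_def by (intro coherent_mod_in_Zp coherent_mult Zp_imp_coherent)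

lemma diag_B_in_Zp:
  assumes "\<And>l. l < k \<Longrightarrow> a l \<in> Zp p" "vec_Zp p k x" "vec_Zp p k y" "p > 1"
  shows "diag_B p a k x y \<in> Zp p"
  unfolding diag_B_def using assms unfolding vec_Zp_def
  by (intro coherent_mod_in_Zp coherent_sum coherent_mult Zp_imp_coherent) auto

lemma zp_ord_ge_iff:
  assumes "f \<in> Zp p"
  shows "enat d \<le> zp_ord p f \<longleftrightarrow> f d = 0"
proof (cases "f = zp_zero")
  case True
  then show ?thesis by (simp add: zp_ord_def zp_zero_def)
next
  case False
  have f0: "f 0 = 0" using Zp_mod_power[OF assms, of 0 0] by simp
  with False obtain n where "f (Suc n) \<noteq> 0" unfolding zp_zero_def
    by (metis not0_implies_Suc)
  define L where "L = (LEAST n. f (Suc n) \<noteq> 0)"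
  have ord: "zp_ord p f = enat L" using False by (simp add: zp_ord_def L_def)
  have fL: "f (Suc L) \<noteq> 0" unfolding L_def by (rule LeastI) fact
  have below: "f (Suc j) = 0" if "j < L" for j
    using not_less_Least[of j "\<lambda>n. f (Suc n) \<noteq> 0"] that unfolding L_def by simp
  show ?thesis
  proof
    assume "enat d \<le> zp_ord p f"
    then show "f d = 0" using ord below f0 by (cases d) auto
  next
    assume fd: "f d = 0"
    show "enat d \<le> zp_ord p f"
    proof (rule ccontr)
      assume "\<not> enat d \<le> zp_ord p f"
      then have "f d mod p ^ Suc L = f (Suc L)"
        using ord by (intro Zp_mod_power[OF assms]) simp
      with fd fL show False by simp
    qed
  qed
qed

lemma in_pow_ideal_if_vanishes:
  assumes f: "f \<in> Zp p" and fN: "f N = 0" and p: "p > 1"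
  shows "in_pow_ideal p N f"
proof -
  have dvd: "p ^ N dvd f n" if "N \<le> n" for n
    using Zp_mod_power[OF f that] fN by (simp add: dvd_eq_mod_eq_0)
  define w where "w n = f (n + N) div p ^ N" for n
  have fw: "f (n + N) = p ^ N * w n" for n
    unfolding w_def using dvd[of "n + N"] by simp
  have pN: "p ^ N > 0" using p by simp
  have "w \<in> Zp p"
    unfolding Zp_def
  proof safe
    fix n
    have "0 \<le> f (n + N)" "f (n + N) < p ^ (n + N)"
      using f unfolding Zp_def by auto
    then show "0 \<le> w n" "w n < p ^ n"
      using pN fw[of n] by (simp_all add: zero_le_mult_iff power_add mult.commute)
    have "f (Suc n + N) mod p ^ (n + N) = f (n + N)"
      by (rule Zp_mod_power[OF f]) simp
    then have "p ^ N * (w (Suc n) mod p ^ n) = p ^ N * w n"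
      unfolding fw by (simp add: power_add mult.commute flip: mult_mod_right)
    then show "w (Suc n) mod p ^ n = w n" using p by simp
  qed
  moreover have "f n = zp_mult p (zp_of_int p (p ^ N)) w n" for n
  proof (cases "n \<le> N")
    case True
    then show ?thesis
      using Zp_mod_power[OF f True] fN
      by (simp add: zp_mult_def zp_of_int_def le_imp_power_dvd)
  next
    case False
    then have "p ^ N mod p ^ n = p ^ N"
      using p pN by (simp add: power_strict_increasing)
    moreover have "f (n + N) mod p ^ n = f n" by (rule Zp_mod_power[OF f]) simp
    ultimately show ?thesis using fw[of n] by (simp add: zp_mult_def zp_of_int_def)
  qed
  ultimately show ?thesis unfolding in_pow_ideal_def by blast
qed

lemma odd_prime_not_dvd_two:
  fixes p :: int
  assumes "prime p" "odd p"
  shows "\<not> p dvd 2"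
  using assms zdvd_imp_le[of p 2] prime_gt_1_int[of p] by (cases "p = 2") auto

lemma exact_power_factor:
  fixes p T :: int
  assumes "p ^ m dvd T" "\<not> p ^ Suc m dvd T"
  obtains U where "T = p ^ m * U" "\<not> p dvd U"
  using assms by (metis dvd_def mult_dvd_mono dvd_refl power_Suc2)

lemma hensel_step:
  fixes p T g c :: int
  assumes p: "prime p" "odd p" and N: "N \<ge> 1"
    and T: "p ^ m dvd T" "\<not> p ^ Suc m dvd T" and c: "\<not> p dvd c"
    and sol: "[T * c^2 = g] (mod p ^ (N + m))"
  shows "\<exists>r. [T * (c + p ^ N * r)^2 = g] (mod p ^ (Suc N + m))"
proof -
  obtain U where U: "T = p ^ m * U" "\<not> p dvd U" using exact_power_factor[OF T] .
  obtain w where w: "T * c^2 - g = p ^ N * p ^ m * w"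
    using sol by (auto simp: cong_iff_dvd_diff power_add)
  have "\<not> p dvd 2 * U * c"
    using U(2) c odd_prime_not_dvd_two[OF p] p(1) by (simp add: prime_dvd_mult_iff)
  then have "coprime (2 * U * c) p"
    using prime_imp_coprime[OF p(1)] coprime_commute by blast
  then obtain y where y: "[2 * U * c * y = 1] (mod p)" using cong_solve_coprime_int by blast
  \<comment> \<open>Newton step: \<open>r\<close> cancels the error \<open>w\<close> against the linear term \<open>2 U c r\<close>.\<close>
  define r where "r = - w * y"
  have "p dvd w * (1 - 2 * U * c * y)"
    using y by (simp add: cong_iff_dvd_diff dvd_diff_commute)
  then have "p dvd w + 2 * U * c * r" unfolding r_def by (simp add: algebra_simps)
  moreover have "p dvd p ^ N * (U * r^2)" using N by (simp add: dvd_power)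
  ultimately have "p dvd (w + 2 * U * c * r) + p ^ N * (U * r^2)" by (rule dvd_add)
  then have "p ^ N * p ^ m * p dvd p ^ N * p ^ m * ((w + 2 * U * c * r) + p ^ N * (U * r^2))"
    by (rule mult_dvd_mono[OF dvd_refl])
  moreover have "T * (c + p ^ N * r)^2 - g
      = p ^ N * p ^ m * ((w + 2 * U * c * r) + p ^ N * (U * r^2))"
    using w U(1) by (simp add: algebra_simps power2_eq_square)
  moreover have "p ^ (Suc N + m) = p ^ N * p ^ m * p" by (simp add: power_add ac_simps)
  ultimately have "p ^ (Suc N + m) dvd T * (c + p ^ N * r)^2 - g" by metis
  then show ?thesis unfolding cong_iff_dvd_diff by blast
qed

lemma coherent_exact_power_dvd:
  fixes p :: int
  assumes "coherent p T" "p ^ m dvd T (Suc m)" "\<not> p ^ Suc m dvd T (Suc m)" "Suc m \<le> n"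
  shows "p ^ m dvd T n" "\<not> p ^ Suc m dvd T n"
proof -
  have c: "[T n = T (Suc m)] (mod p ^ Suc m)" by (rule coherent_cong) fact+
  then have "[T n = T (Suc m)] (mod p ^ m)" by (rule cong_dvd_modulus) (simp add: le_imp_power_dvd)
  then show "p ^ m dvd T n" using assms(2) cong_dvd_iff by blast
  show "\<not> p ^ Suc m dvd T n" using assms(3) cong_dvd_iff[OF c] by blast
qed

lemma hensel_coherent_step:
  fixes p c :: int
  assumes p: "prime p" "odd p" and cT: "coherent p T" and cg: "coherent p g"
    and T: "p ^ m dvd T (Suc m)" "\<not> p ^ Suc m dvd T (Suc m)" and c: "\<not> p dvd c"
    and sol: "[T (Suc n + m) * c^2 = g (Suc n + m)] (mod p ^ (Suc n + m))"
  shows "\<exists>c'. \<not> p dvd c' \<and> [c' = c] (mod p ^ Suc n)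
    \<and> [T (Suc (Suc n) + m) * c'^2 = g (Suc (Suc n) + m)] (mod p ^ (Suc (Suc n) + m))"
proof -
  have "[T (Suc (Suc n) + m) * c^2 = T (Suc n + m) * c^2] (mod p ^ (Suc n + m))"
    by (intro cong_mult cong_refl coherent_cong[OF cT]) simp
  also note sol
  also have "[g (Suc n + m) = g (Suc (Suc n) + m)] (mod p ^ (Suc n + m))"
    by (rule cong_sym, rule coherent_cong[OF cg]) simp
  finally have sol': "[T (Suc (Suc n) + m) * c^2 = g (Suc (Suc n) + m)] (mod p ^ (Suc n + m))" .
  have Tn: "p ^ m dvd T (Suc (Suc n) + m)" "\<not> p ^ Suc m dvd T (Suc (Suc n) + m)"
    using coherent_exact_power_dvd[OF cT T] by simp_all
  obtain r where r: "[T (Suc (Suc n) + m) * (c + p ^ Suc n * r)^2 = g (Suc (Suc n) + m)]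
      (mod p ^ (Suc (Suc n) + m))"
    using hensel_step[OF p _ Tn c sol'] by auto
  have "[c + p ^ Suc n * r = c] (mod p ^ Suc n)" by (simp add: cong_iff_dvd_diff)
  moreover from this have "\<not> p dvd c + p ^ Suc n * r" using c by (simp add: dvd_add_left_iff)
  ultimately show ?thesis using r by blast
qed

lemma hensel_coherent:
  fixes p c0 :: int
  assumes p: "prime p" "odd p" and cT: "coherent p T" and cg: "coherent p g"
    and T: "p ^ m dvd T (Suc m)" "\<not> p ^ Suc m dvd T (Suc m)" and c0: "\<not> p dvd c0"
    and sol: "[T (Suc m) * c0^2 = g (Suc m)] (mod p ^ Suc m)"
  shows "\<exists>C \<in> Zp p. \<forall>n. [T n * (C n)^2 = g n] (mod p ^ n)"
proof -
  define P where "P n c \<longleftrightarrow> \<not> p dvd c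
    \<and> [T (Suc n + m) * c^2 = g (Suc n + m)] (mod p ^ (Suc n + m))" for n c
  have "P 0 c0" using c0 sol unfolding P_def by simp
  moreover have "\<exists>c'. P (Suc n) c' \<and> [c' = c] (mod p ^ Suc n)" if "P n c" for n c
    using hensel_coherent_step[OF p cT cg T] that unfolding P_def by auto
  ultimately obtain f where f: "\<And>n. P n (f n)" "\<And>n. [f (Suc n) = f n] (mod p ^ Suc n)"
    using dependent_nat_choice[of P "\<lambda>n c c'. [c' = c] (mod p ^ Suc n)"] by blast
  have "coherent p f"
    unfolding coherent_def using f(2) cong_dvd_modulus le_imp_power_dvd
    by (metis le_SucI order_refl)
  then have CZ: "(\<lambda>n. f n mod p ^ n) \<in> Zp p"
    using coherent_mod_in_Zp prime_gt_1_int[OF p(1)] by blast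
  have "[T n * (f n mod p ^ n)^2 = g n] (mod p ^ n)" for n
  proof -
    have "[T n * (f n mod p ^ n)^2 = T (Suc n + m) * (f n)^2] (mod p ^ n)"
      using coherent_cong[OF cT, of n "Suc n + m"] by (intro cong_mult cong_pow) (auto simp: cong_sym)
    also have "[T (Suc n + m) * (f n)^2 = g (Suc n + m)] (mod p ^ n)"
      using f(1)[of n] unfolding P_def by (rule cong_dvd_modulus[OF conjunct2]) (simp add: le_imp_power_dvd)
    also have "[g (Suc n + m) = g n] (mod p ^ n)" using coherent_cong[OF cg] by simp
    finally show ?thesis .
  qed
  with CZ show ?thesis by (intro bexI[where x = "\<lambda>n. f n mod p ^ n"]) simp_all
qed

lemma vec_Zp_scaled:
  assumes "vec_Zp p k x" "\<And>l. l < k \<Longrightarrow> coherent p (s l)" "p > 1"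
  shows "vec_Zp p k (\<lambda>l n. x l n * s l n mod p ^ n)"
  unfolding vec_Zp_def
proof (intro allI impI)
  fix l assume "l < k"
  then show "(\<lambda>n. x l n * s l n mod p ^ n) \<in> Zp p"
    using assms unfolding vec_Zp_def
    by (intro coherent_mod_in_Zp coherent_mult) (auto intro: Zp_imp_coherent)
qed

lemma diag_Q_scaled:
  "diag_Q p a k (\<lambda>l n. x l n * s l n mod p ^ n) n
    = (\<Sum>l<k. a l n * x l n * x l n * (s l n)^2) mod p ^ n"
proof -
  have "[a l n * (x l n * s l n mod p ^ n) * (x l n * s l n mod p ^ n)
      = a l n * x l n * x l n * (s l n)^2] (mod p ^ n)" for l
    by (rule cong_trans[OF cong_mult[OF cong_mult[OF cong_refl cong_mod_leftI[OF cong_refl]]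
          cong_mod_leftI[OF cong_refl]]]) (simp add: power2_eq_square ac_simps)
  then have "[(\<Sum>l<k. a l n * (x l n * s l n mod p ^ n) * (x l n * s l n mod p ^ n))
      = (\<Sum>l<k. a l n * x l n * x l n * (s l n)^2)] (mod p ^ n)"
    by (rule cong_sum)
  then show ?thesis by (simp add: diag_Q_def diag_B_def cong_def)
qed

lemma diag_Q_represents_if_approx:
  fixes p t :: int and a x :: "nat \<Rightarrow> nat \<Rightarrow> int" and c :: "nat \<Rightarrow> int"
  assumes p: "prime p" "odd p" and a: "\<And>l. l < k \<Longrightarrow> a l \<in> Zp p" and x: "vec_Zp p k x"
    and j: "j < k" and Tj: "p ^ m dvd a j (Suc m) * x j (Suc m) * x j (Suc m)"
      "\<not> p ^ Suc m dvd a j (Suc m) * x j (Suc m) * x j (Suc m)"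
    and c: "\<not> p dvd c j"
    and approx: "p ^ Suc m dvd (\<Sum>l<k. a l (Suc m) * x l (Suc m) * x l (Suc m) * (c l)^2) - p ^ m * t"
  shows "\<exists>z. vec_Zp p k z \<and> diag_Q p a k z = zp_of_int p (p ^ m * t)"
proof -
  have p1: "p > 1" using p(1) prime_gt_1_int by blast
  define T where "T l n = a l n * x l n * x l n" for l n
  have cT: "coherent p (T l)" if "l < k" for l
    unfolding T_def using a[OF that] x that unfolding vec_Zp_def
    by (intro coherent_mult Zp_imp_coherent) auto
  define R where "R = {..<k} - {j}"
  have split: "(\<Sum>l<k. f l) = f j + (\<Sum>l\<in>R. f l)" for f :: "nat \<Rightarrow> int"
    unfolding R_def using j by (simp add: sum.remove)
  define g where "g n = p ^ m * t - (\<Sum>l\<in>R. T l n * (c l)^2)" for n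
  have cg: "coherent p g"
    unfolding g_def by (intro coherent_diff coherent_const coherent_sum coherent_mult cT) (auto simp: R_def)
  have "[T j (Suc m) * (c j)^2 = g (Suc m)] (mod p ^ Suc m)"
    using approx unfolding g_def T_def cong_iff_dvd_diff split[of "\<lambda>l. _ l * (c l)^2"]
    by (simp add: dvd_diff_commute algebra_simps)
  then obtain C where C: "C \<in> Zp p" "\<And>n. [T j n * (C n)^2 = g n] (mod p ^ n)"
    using hensel_coherent[OF p cT[OF j] cg _ _ c] Tj unfolding T_def by blast
  define s where "s l = (if l = j then C else (\<lambda>_. c l))" for l
  have "vec_Zp p k (\<lambda>l n. x l n * s l n mod p ^ n)"
    using x p1 Zp_imp_coherent[OF C(1)] coherent_const
    by (intro vec_Zp_scaled) (auto simp: s_def)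
  moreover have "diag_Q p a k (\<lambda>l n. x l n * s l n mod p ^ n) n = zp_of_int p (p ^ m * t) n" for n
  proof -
    have "[(\<Sum>l<k. T l n * (s l n)^2) = g n + (\<Sum>l\<in>R. T l n * (c l)^2)] (mod p ^ n)"
      unfolding split[of "\<lambda>l. T l n * (s l n)^2"] using C(2)
      by (simp add: s_def R_def cong_add)
    then show ?thesis
      unfolding diag_Q_scaled zp_of_int_def g_def T_def by (simp add: cong_def)
  qed
  ultimately show ?thesis by blast
qed

lemma sum_dvd_imp_other_term_not_dvd:
  fixes q :: int and T :: "nat \<Rightarrow> int"
  assumes "q dvd (\<Sum>l<k. T l)" "j < k" "\<not> q dvd T j"
  obtains i where "i < k" "i \<noteq> j" "\<not> q dvd T i"
proof -
  have "\<not> q dvd (\<Sum>l\<in>{..<k} - {j}. T l)"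
  proof
    assume "q dvd (\<Sum>l\<in>{..<k} - {j}. T l)"
    with assms(1) have "q dvd (\<Sum>l<k. T l) - (\<Sum>l\<in>{..<k} - {j}. T l)" by (rule dvd_diff)
    then show False using assms(2,3) by (simp add: sum.remove)
  qed
  then show ?thesis using that dvd_sum[of "{..<k} - {j}" q T] by blast
qed

text \<open>Scaling every coordinate by \<open>\<lambda>\<close> and the \<open>j\<close>-th one by \<open>\<lambda> + 1\<close> changes the sum
  into \<open>\<lambda>\<^sup>2 \<Sum>T + (2\<lambda> + 1) T\<^sub>j\<close>, and \<open>\<lambda>\<close> is chosen to make this \<open>p\<^sup>m t\<close> modulo \<open>p\<^sup>m\<^sup>+\<^sup>1\<close>.
  If \<open>\<lambda> + 1\<close> is not a unit then \<open>\<lambda>\<close> is, and since \<open>\<Sum>T\<close> vanishes modulo \<open>p\<^sup>m\<^sup>+\<^sup>1\<close>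
  some other term has exact valuation \<open>m\<close>.\<close>
lemma exists_unit_scaling:
  fixes p t :: int and T :: "nat \<Rightarrow> int"
  assumes p: "prime p" "odd p" and j: "j < k" "p ^ m dvd T j" "\<not> p ^ Suc m dvd T j"
    and sum: "p ^ Suc m dvd (\<Sum>l<k. T l)"
  obtains c i where "i < k" "\<not> p ^ Suc m dvd T i" "\<not> p dvd c i"
    "p ^ Suc m dvd (\<Sum>l<k. T l * (c l)^2) - p ^ m * t"
proof -
  define R where "R = {..<k} - {j}"
  have split: "(\<Sum>l<k. f l) = f j + (\<Sum>l\<in>R. f l)" for f :: "nat \<Rightarrow> int"
    unfolding R_def using j by (simp add: sum.remove)
  obtain U where U: "T j = p ^ m * U" "\<not> p dvd U" using exact_power_factor[OF j(2,3)] .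
  have "\<not> p dvd 2 * U" using U(2) odd_prime_not_dvd_two[OF p] p(1) by (simp add: prime_dvd_mult_iff)
  then have "coprime (2 * U) p" using prime_imp_coprime[OF p(1)] coprime_commute by blast
  then obtain y where y: "[2 * U * y = 1] (mod p)" using cong_solve_coprime_int by blast
  define lam where "lam = (t - U) * y"
  define c where "c l = (if l = j then lam + 1 else lam)" for l
  have "[(2 * U * y) * (t - U) + U = 1 * (t - U) + U] (mod p)"
    by (intro cong_add cong_mult y cong_refl)
  then have "p dvd (2 * lam + 1) * U - t"
    unfolding lam_def by (simp add: cong_iff_dvd_diff algebra_simps)
  then have "p ^ Suc m dvd lam^2 * (\<Sum>l<k. T l) + p ^ m * ((2 * lam + 1) * U - t)"
    using sum by (intro dvd_add) simp_all
  also have "\<dots> = (\<Sum>l<k. T l * (c l)^2) - p ^ m * t"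
    unfolding split[of "\<lambda>l. T l * (c l)^2"] split[of T] U(1)
    by (simp add: c_def R_def sum_distrib_left algebra_simps power2_eq_square)
  finally have approx: "p ^ Suc m dvd (\<Sum>l<k. T l * (c l)^2) - p ^ m * t" .
  show ?thesis
  proof (cases "p dvd lam + 1")
    case False
    then show ?thesis using that[OF j(1) j(3) _ approx] by (simp add: c_def)
  next
    case True
    have "\<not> p dvd lam"
    proof
      assume "p dvd lam"
      then have "p dvd (lam + 1) - lam" using True by (rule dvd_diff[rotated])
      then show False using p(1) by (simp add: prime_int_iff)
    qed
    obtain i where "i < k" "i \<noteq> j" "\<not> p ^ Suc m dvd T i"
      using sum_dvd_imp_other_term_not_dvd[OF sum j(1,3)] .
    then show ?thesis using that[of i c] approx \<open>\<not> p dvd lam\<close> by (simp add: c_def)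
  qed
qed

lemma diag_Q_represents_if_balanced:
  fixes p t :: int and a x :: "nat \<Rightarrow> nat \<Rightarrow> int"
  assumes p: "prime p" "odd p" and a: "\<And>l. l < k \<Longrightarrow> a l \<in> Zp p" and x: "vec_Zp p k x"
    and bal: "\<And>l. l < k \<Longrightarrow> p ^ m dvd a l (Suc m) * x l (Suc m) * x l (Suc m)"
    and j: "j < k" "\<not> p ^ Suc m dvd a j (Suc m) * x j (Suc m) * x j (Suc m)"
    and sum: "p ^ Suc m dvd (\<Sum>l<k. a l (Suc m) * x l (Suc m) * x l (Suc m))"
  shows "\<exists>z. vec_Zp p k z \<and> diag_Q p a k z = zp_of_int p (p ^ m * t)"
proof -
  obtain c i where i: "i < k" "\<not> p ^ Suc m dvd a i (Suc m) * x i (Suc m) * x i (Suc m)"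
    and c: "\<not> p dvd c i"
    and approx: "p ^ Suc m dvd (\<Sum>l<k. a l (Suc m) * x l (Suc m) * x l (Suc m) * (c l)^2) - p ^ m * t"
    using exists_unit_scaling[OF p j(1) bal[OF j(1)] j(2) sum] .
  show ?thesis by (rule diag_Q_represents_if_approx[OF p a x i(1) bal[OF i(1)] i(2) c approx])
qed

lemma exists_quadratic_nonresidue:
  fixes p :: int
  assumes p: "prime p" "odd p"
  shows "\<exists>d. 0 < d \<and> d < p \<and> \<not> QuadRes p d"
proof -
  have p1: "p > 1" using p(1) prime_gt_1_int by blast
  define A where "A = {1..p-1}"
  define f where "f y = y^2 mod p" for y :: int
  have fA: "f ` A \<subseteq> A"
  proof
    fix d assume "d \<in> f ` A"
    then obtain y where y: "y \<in> A" "d = f y" by blast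
    then have "\<not> p dvd y^2" using p(1) zdvd_imp_le[of p y] unfolding A_def
      by (auto simp: prime_dvd_power_iff)
    then have "f y \<noteq> 0" by (simp add: f_def dvd_eq_mod_eq_0)
    moreover have "0 \<le> f y" "f y < p" unfolding f_def using p1 by simp_all
    ultimately show "d \<in> A" unfolding y(2) A_def by auto
  qed
  have "(p - 1)^2 = 1 + p * (p - 2)" by (simp add: power2_eq_square algebra_simps)
  then have "f 1 = f (p - 1)" unfolding f_def by simp
  moreover have "1 \<in> A" "p - 1 \<in> A" "1 \<noteq> p - 1"
    unfolding A_def using p1 p(2) by (auto simp: odd_pos)
  ultimately have "\<not> inj_on f A" unfolding inj_on_def by blast
  then have "f ` A \<noteq> A" using eq_card_imp_inj_on[of A f] unfolding A_def by auto
  then obtain d where d: "d \<in> A" "d \<notin> f ` A" using fA by blast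
  have "\<not> QuadRes p d"
  proof
    assume "QuadRes p d"
    then obtain y where "[y^2 = d] (mod p)" unfolding QuadRes_def by blast
    then have "[(y mod p)^2 = d] (mod p)" by (simp add: cong_def power_mod)
    then have fy: "f (y mod p) = d" unfolding f_def using d(1) unfolding A_def cong_def by simp
    moreover have "y mod p \<noteq> 0" using fy d(1) by (auto simp: f_def A_def)
    moreover have "0 \<le> y mod p" "y mod p < p" using p1 by simp_all
    ultimately have "y mod p \<in> A" unfolding A_def by auto
    then show False using fy d(2) by blast
  qed
  moreover have "0 < d" "d < p" using d(1) unfolding A_def by auto
  ultimately show ?thesis by blast
qed

lemma nonsq_unit:
  fixes p :: int
  assumes "prime p" "odd p"
  shows "\<not> p dvd nonsq p"
proof -
  have "0 < nonsq p \<and> nonsq p < p"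
    unfolding nonsq_def using someI_ex[OF exists_quadratic_nonresidue[OF assms]] by blast
  then show ?thesis by (auto dest: zdvd_imp_le)
qed

lemma nu_s_le_if_represents:
  fixes p w :: int and a :: "nat \<Rightarrow> nat \<Rightarrow> int"
  assumes p: "prime p"
    and rep: "\<And>t. \<exists>z. vec_Zp p k z \<and> diag_Q p a k z = zp_of_int p (p ^ m * t)"
    and b: "b \<le> 1" and w: "\<not> p dvd w"
  shows "nu_s p a k (zp_of_int p (p ^ b * w)) \<le> enat (Suc m)"
proof -
  have p1: "p > 1" using p prime_gt_1_int by blast
  define s where "s = zp_of_int p (p ^ b * w)"
  have s_pow: "zp_mult p s (zp_of_int p (p ^ (2 * u))) = zp_of_int p (p ^ (b + 2 * u) * w)" for u
    unfolding s_def zp_mult_def zp_of_int_def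
    by (rule ext) (simp add: mod_mult_eq power_add ac_simps)
  define R where "R u \<longleftrightarrow> (\<exists>x. vec_Zp p k x \<and> diag_Q p a k x = zp_mult p s (zp_of_int p (p ^ (2 * u))))"
    for u
  define u where "u = (Suc m - b) div 2"
  have "m \<le> b + 2 * u" "b + 2 * u \<le> Suc m" unfolding u_def using b by presburger+
  then have "p ^ (b + 2 * u) * w = p ^ m * (p ^ (b + 2 * u - m) * w)"
    by (simp add: mult.assoc flip: power_add)
  then have "R u" unfolding R_def s_pow using rep by metis
  define e where "e = b + 2 * (LEAST u. R u)"
  have "e \<le> Suc m" using Least_le[of R, OF \<open>R u\<close>] \<open>b + 2 * u \<le> Suc m\<close> unfolding e_def by linarith
  have "nu_s p a k s
      = (if \<exists>u. R u then zp_ord p (zp_mult p s (zp_of_int p (p ^ (2 * (LEAST u. R u))))) else \<infinity>)"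
    unfolding nu_s_def Let_def R_def by simp
  then have nu_s: "nu_s p a k s = zp_ord p (zp_of_int p (p ^ e * w))"
    using \<open>R u\<close> unfolding e_def s_pow by auto
  have "\<not> p ^ Suc (Suc m) dvd p ^ e * w"
  proof
    assume "p ^ Suc (Suc m) dvd p ^ e * w"
    moreover have "p ^ e * p dvd p ^ Suc (Suc m)"
      using \<open>e \<le> Suc m\<close> by (metis Suc_le_mono le_imp_power_dvd power_Suc2)
    ultimately have "p ^ e * p dvd p ^ e * w" by (rule dvd_trans[rotated])
    then show False using w p1 by simp
  qed
  then have "zp_of_int p (p ^ e * w) (Suc (Suc m)) \<noteq> 0"
    unfolding zp_of_int_def by (simp add: dvd_eq_mod_eq_0)
  then have "\<not> enat (Suc (Suc m)) \<le> nu_s p a k s"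
    unfolding nu_s using zp_ord_ge_iff[OF zp_of_int_in_Zp[OF p1]] by simp
  then show ?thesis unfolding s_def[symmetric] by (cases "nu_s p a k s") auto
qed

lemma nu_le_if_represents:
  fixes p :: int and a :: "nat \<Rightarrow> nat \<Rightarrow> int"
  assumes p: "prime p" "odd p"
    and rep: "\<And>t. \<exists>z. vec_Zp p k z \<and> diag_Q p a k z = zp_of_int p (p ^ m * t)"
  shows "nu p a k \<le> enat (Suc m)"
proof -
  have "nu_s p a k s \<le> enat (Suc m)" if "s \<in> SC p" for s
  proof -
    have "\<not> p dvd 1" "\<not> p dvd nonsq p" using p(1) nonsq_unit[OF p] by (simp_all add: prime_int_iff)
    moreover have "s = zp_of_int p (p ^ 0 * 1) \<or> s = zp_of_int p (p ^ 0 * nonsq p)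
        \<or> s = zp_of_int p (p ^ 1 * 1) \<or> s = zp_of_int p (p ^ 1 * nonsq p)"
      using that unfolding SC_def by auto
    ultimately show ?thesis
      using nu_s_le_if_represents[OF p(1) rep, of 0 1] nu_s_le_if_represents[OF p(1) rep, of 1 1]
        nu_s_le_if_represents[OF p(1) rep, of 0 "nonsq p"]
        nu_s_le_if_represents[OF p(1) rep, of 1 "nonsq p"] by auto
  qed
  then show ?thesis unfolding nu_def by (simp add: Sup_le_iff)
qed

lemma diag_terms_dvd_below_nu:
  fixes p :: int and a x :: "nat \<Rightarrow> nat \<Rightarrow> int"
  assumes p: "prime p" "odd p" and a: "\<And>l. l < k \<Longrightarrow> a l \<in> Zp p" and x: "vec_Zp p k x"
    and ord: "nu p a k \<le> zp_ord p (diag_Q p a k x)"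
    and d: "enat d \<le> nu p a k - 1" and l: "l < k"
  shows "p ^ d dvd a l d * x l d * x l d"
  using d l
proof (induction d arbitrary: l)
  case 0
  then show ?case by simp
next
  case (Suc d)
  define T where "T l n = a l n * x l n * x l n" for l n
  have bal: "p ^ d dvd T i (Suc d)" if "i < k" for i
  proof -
    have "coherent p (T i)"
      unfolding T_def using a[OF that] x that unfolding vec_Zp_def
      by (intro coherent_mult Zp_imp_coherent) auto
    then have "[T i (Suc d) = T i d] (mod p ^ d)" by (rule coherent_cong) simp
    moreover have "enat d \<le> nu p a k - 1" using Suc.prems(1) by (rule order_trans[rotated]) simp
    ultimately show ?thesis using Suc.IH that cong_dvd_iff unfolding T_def by blast
  qed
  have nu: "enat (Suc (Suc d)) \<le> nu p a k"
    using Suc.prems(1) by (cases "nu p a k") (auto simp: one_enat_def)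
  have QZ: "diag_Q p a k x \<in> Zp p"
    unfolding diag_Q_def by (intro diag_B_in_Zp a x prime_gt_1_int[OF p(1)])
  have "enat (Suc d) \<le> enat (Suc (Suc d))" by simp
  also note nu
  also note ord
  finally have "diag_Q p a k x (Suc d) = 0" by (simp add: zp_ord_ge_iff[OF QZ])
  then have sum: "p ^ Suc d dvd (\<Sum>i<k. T i (Suc d))"
    unfolding diag_Q_def diag_B_def T_def by (simp add: dvd_eq_mod_eq_0)
  show ?case
  proof (rule ccontr)
    assume "\<not> p ^ Suc d dvd a l (Suc d) * x l (Suc d) * x l (Suc d)"
    from diag_Q_represents_if_balanced[OF p a x bal[unfolded T_def] Suc.prems(2) this sum[unfolded T_def]]
    have "nu p a k \<le> enat (Suc d)" by (rule nu_le_if_represents[OF p])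
    with nu have "enat (Suc (Suc d)) \<le> enat (Suc d)" by (rule order_trans)
    then show False by simp
  qed
qed

lemma mixed_term_dvd:
  fixes q A X Y :: int
  assumes "q dvd A * X * X" "q dvd A * Y * Y"
  shows "q dvd A * X * Y"
proof -
  have "q^2 dvd (A * X * Y)^2"
    using mult_dvd_mono[OF assms] by (simp add: power2_eq_square ac_simps)
  then show ?thesis by simp
qed

lemma diag_B_in_pow_ideal_if_terms_dvd:
  fixes p :: int and a x y :: "nat \<Rightarrow> nat \<Rightarrow> int"
  assumes a: "\<And>l. l < k \<Longrightarrow> a l \<in> Zp p" and x: "vec_Zp p k x" and y: "vec_Zp p k y"
    and p: "p > 1"
    and dvd_x: "\<And>l. l < k \<Longrightarrow> p ^ N dvd a l N * x l N * x l N"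
    and dvd_y: "\<And>l. l < k \<Longrightarrow> p ^ N dvd a l N * y l N * y l N"
  shows "in_pow_ideal p N (diag_B p a k x y)"
proof (rule in_pow_ideal_if_vanishes)
  show "diag_B p a k x y \<in> Zp p" by (intro diag_B_in_Zp a x y p)
  have "p ^ N dvd a l N * x l N * y l N" if "l < k" for l
    using dvd_x[OF that] dvd_y[OF that] by (rule mixed_term_dvd)
  then have "p ^ N dvd (\<Sum>l<k. a l N * x l N * y l N)" by (intro dvd_sum) simp
  then show "diag_B p a k x y N = 0" unfolding diag_B_def by (simp add: dvd_eq_mod_eq_0)
qed (rule p)

lemma lat_coeff_in_Zp:
  assumes "zp_unit p (eps l)" "p > 1"
  shows "lat_coeff p e eps l \<in> Zp p"
  unfolding lat_coeff_def using assms(1) unfolding zp_unit_def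
  by (intro zp_mult_in_Zp zp_of_int_in_Zp assms(2)) simp

theorem lemma2p8:
  fixes p :: int and k :: nat and e :: "nat \<Rightarrow> nat" and eps :: "nat \<Rightarrow> nat \<Rightarrow> int"
  assumes "prime p" and "odd p" and "k \<ge> 4"
    and "e 0 = 0" and "\<And>i j. i \<le> j \<Longrightarrow> j < k \<Longrightarrow> e i \<le> e j"
    and "\<And>i. i < k \<Longrightarrow> zp_unit p (eps i)"
    and "anisotropic p (lat_coeff p e eps) 3"
  shows "\<forall>x y. vec_Zp p k x \<and> vec_Zp p k y
      \<and> zp_ord p (diag_Q p (lat_coeff p e eps) k x) = nu p (lat_coeff p e eps) k
      \<and> zp_ord p (diag_Q p (lat_coeff p e eps) k y) = nu p (lat_coeff p e eps) k
      \<longrightarrow> in_pow_ideal p (the_enat (nu p (lat_coeff p e eps) k) - 1)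
            (diag_B p (lat_coeff p e eps) k x y)"
proof (intro allI impI)
  fix x y
  define a where "a = lat_coeff p e eps"
  \<comment> \<open>\<open>the_enat \<infinity>\<close> is unspecified, but \<open>enat N \<le> \<nu> - 1\<close> holds also for \<open>\<nu> = \<infinity>\<close>.\<close>
  define N where "N = the_enat (nu p a k) - 1"
  assume "vec_Zp p k x \<and> vec_Zp p k y
      \<and> zp_ord p (diag_Q p (lat_coeff p e eps) k x) = nu p (lat_coeff p e eps) k
      \<and> zp_ord p (diag_Q p (lat_coeff p e eps) k y) = nu p (lat_coeff p e eps) k"
  then have x: "vec_Zp p k x" and y: "vec_Zp p k y"
    and ord: "nu p a k \<le> zp_ord p (diag_Q p a k x)" "nu p a k \<le> zp_ord p (diag_Q p a k y)"
    unfolding a_def by simp_all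
  have p1: "p > 1" using assms(1) prime_gt_1_int by blast
  have a: "\<And>l. l < k \<Longrightarrow> a l \<in> Zp p"
    unfolding a_def using assms(6) p1 by (simp add: lat_coeff_in_Zp)
  have N: "enat N \<le> nu p a k - 1" unfolding N_def by (cases "nu p a k") (simp_all add: one_enat_def)
  have dx: "p ^ N dvd a l N * x l N * x l N" if "l < k" for l
    by (rule diag_terms_dvd_below_nu[OF assms(1,2) a x ord(1) N that])
  have dy: "p ^ N dvd a l N * y l N * y l N" if "l < k" for l
    by (rule diag_terms_dvd_below_nu[OF assms(1,2) a y ord(2) N that])
  have "in_pow_ideal p N (diag_B p a k x y)"
    using diag_B_in_pow_ideal_if_terms_dvd[where a = a and x = x and y = y, OF a x y p1 dx dy] .
  then show "in_pow_ideal p (the_enat (nu p (lat_coeff p e eps) k) - 1)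
      (diag_B p (lat_coeff p e eps) k x y)"
    unfolding N_def a_def .
qed

end
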